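(* Let $G=(V,E)$ be a connected regular graph and let $p_k(x,y)$ be the $k$-step transition probabilities of simple random walk on $G$. For every $n\ge1$, the kernel $g_n(x,y)=\sum_{2^n-2\le k<2^{n+1}-2}p_k(x,y)$ is symmetric and positive semi-definite (i.e. $\sum_{x,y}f(x)g_n(x,y)f(y)\ge0$ for every finitely supported $f:V\to\mathbb{R}$). Moreover $g_n(x,y)\ge0$, $g_n(x,y)=0$ whenever $d(x,y)>2^{n+1}-2$, and, if $G$ is transient, $\sum_{n\ge1}g_n(x,y)=g(x,y)$, the Green function.
   Context: $p_0(x,y)=1_{x=y}$. $d(x,y)$ is the graph distance. The Green function is $g(x,y)=\sum_{k\ge0}p_k(x,y)$. *)

theory Defs
  imports Complex_Main
begin

definition simple_graph :: "('a \<Rightarrow> 'a \<Rightarrow> bool) \<Rightarrow> bool" where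
  "simple_graph E \<longleftrightarrow> (\<forall>x y. E x y \<longrightarrow> E y x) \<and> (\<forall>x. \<not> E x x)"

definition nbrs :: "('a \<Rightarrow> 'a \<Rightarrow> bool) \<Rightarrow> 'a \<Rightarrow> 'a set" where
  "nbrs E x = {y. E x y}"

definition regular_graph :: "('a \<Rightarrow> 'a \<Rightarrow> bool) \<Rightarrow> bool" where
  "regular_graph E \<longleftrightarrow> (\<exists>d::nat. \<forall>x. finite (nbrs E x) \<and> card (nbrs E x) = d)"

definition edge_rel :: "('a \<Rightarrow> 'a \<Rightarrow> bool) \<Rightarrow> ('a \<times> 'a) set" where
  "edge_rel E = {(x, y). E x y}"

definition connected_graph :: "('a \<Rightarrow> 'a \<Rightarrow> bool) \<Rightarrow> bool" where
  "connected_graph E \<longleftrightarrow> (\<forall>x y. (x, y) \<in> (edge_rel E)\<^sup>*)"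

definition gdist :: "('a \<Rightarrow> 'a \<Rightarrow> bool) \<Rightarrow> 'a \<Rightarrow> 'a \<Rightarrow> nat" where
  "gdist E x y = (LEAST k. (x, y) \<in> edge_rel E ^^ k)"

fun srw_p :: "('a \<Rightarrow> 'a \<Rightarrow> bool) \<Rightarrow> nat \<Rightarrow> 'a \<Rightarrow> 'a \<Rightarrow> real" where
  "srw_p E 0 x y = (if x = y then 1 else 0)"
| "srw_p E (Suc k) x y = (\<Sum>z\<in>nbrs E x. srw_p E k z y) / real (card (nbrs E x))"

definition green :: "('a \<Rightarrow> 'a \<Rightarrow> bool) \<Rightarrow> 'a \<Rightarrow> 'a \<Rightarrow> real" where
  "green E x y = (\<Sum>k. srw_p E k x y)"

text \<open>Transience: the Green function is finite (expected number of visits finite).\<close>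
definition transient :: "('a \<Rightarrow> 'a \<Rightarrow> bool) \<Rightarrow> bool" where
  "transient E \<longleftrightarrow> (\<forall>x y. summable (\<lambda>k. srw_p E k x y))"

definition gblock :: "('a \<Rightarrow> 'a \<Rightarrow> bool) \<Rightarrow> nat \<Rightarrow> 'a \<Rightarrow> 'a \<Rightarrow> real" where
  "gblock E n x y = (\<Sum>k\<in>{2^n - 2 ..< 2^(n+1) - 2}. srw_p E k x y)"

end

theory Submission
  imports Defs
begin

text \<open>The transition operator P of the walk is self-adjoint on a regular graph, and
  p_2j + p_(2j+1) is the kernel of P^j (I + P) P^j. Since the block g_n consists of whole
  such pairs, its quadratic form is a sum of terms <h, (I + P) h> with h = P^j f, and these
  are nonnegative because <h, P h> is an average of h(x) h(z) over the edges xz, which is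
  bounded below by -<h, h> since (h(x) + h(z))^2 >= 0. The remaining claims are elementary:
  a walk of length k only reaches vertices at distance at most k, and the blocks
  [2^n - 2, 2^(n+1) - 2) tile the natural numbers.\<close>

lemma srw_p_nonneg: "srw_p E k x y \<ge> 0"
  by (induction k arbitrary: x y) (auto intro!: divide_nonneg_nonneg sum_nonneg)

lemma srw_p_nonzero_relpow: "srw_p E k x y \<noteq> 0 \<Longrightarrow> (x, y) \<in> edge_rel E ^^ k"
proof (induction k arbitrary: x y)
  case 0
  then show ?case by (simp split: if_splits)
next
  case (Suc k)
  then have "(\<Sum>z\<in>nbrs E x. srw_p E k z y) \<noteq> 0" by auto
  then obtain z where "z \<in> nbrs E x" "srw_p E k z y \<noteq> 0"
    by (rule sum.not_neutral_contains_not_neutral)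
  then have "(x, z) \<in> edge_rel E" "(z, y) \<in> edge_rel E ^^ k"
    using Suc.IH by (auto simp: nbrs_def edge_rel_def)
  then show ?case by (rule relpow_Suc_I2)
qed

lemma gblock_nonneg: "gblock E n x y \<ge> 0"
  unfolding gblock_def by (rule sum_nonneg) (rule srw_p_nonneg)

lemma gblock_eq_0_if_far:
  assumes "gdist E x y > 2^(n+1) - 2"
  shows "gblock E n x y = 0"
  unfolding gblock_def
proof (rule sum.neutral, rule ballI, rule ccontr)
  fix k assume k: "k \<in> {2^n - 2..<2^(n+1) - 2}" and "srw_p E k x y \<noteq> 0"
  then have "gdist E x y \<le> k"
    unfolding gdist_def by (intro Least_le srw_p_nonzero_relpow)
  with k assms show False by auto
qed

lemma sum_gblock_eq_partial_green:
  "(\<Sum>n<N. gblock E (n+1) x y) = (\<Sum>k<2^(N+1) - 2. srw_p E k x y)"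
proof (induction N)
  case 0
  then show ?case by (simp add: gblock_def)
next
  case (Suc N)
  have le: "(2::nat)^(N+1) - 2 \<le> 2^(N+2) - 2" by simp
  have "(\<Sum>n<Suc N. gblock E (n+1) x y) = (\<Sum>k<2^(N+1) - 2. srw_p E k x y) + gblock E (N+1) x y"
    using Suc by simp
  also have "\<dots> = (\<Sum>k<2^(N+2) - 2. srw_p E k x y)"
    unfolding gblock_def lessThan_atLeast0
    by (subst sum.atLeastLessThan_concat) (use le in \<open>auto simp: numeral_2_eq_2\<close>)
  finally show ?case by (simp add: numeral_2_eq_2)
qed

lemma gblock_sums_green:
  assumes "summable (\<lambda>k. srw_p E k x y)"
  shows "(\<lambda>n. gblock E (n+1) x y) sums green E x y"
proof -
  have "(\<lambda>m. \<Sum>k<m. srw_p E k x y) \<longlonglongrightarrow> green E x y"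
    unfolding green_def by (rule summable_LIMSEQ[OF assms])
  moreover have "strict_mono (\<lambda>N::nat. (2::nat)^(N+1) - 2)"
    unfolding strict_mono_Suc_iff
  proof
    fix N :: nat
    have "(2::nat) \<le> 2^(N+1)" by simp
    then show "(2::nat)^(N+1) - 2 < 2^(Suc N+1) - 2" by (intro diff_less_mono) simp_all
  qed
  ultimately have "((\<lambda>m. \<Sum>k<m. srw_p E k x y) \<circ> (\<lambda>N. 2^(N+1) - 2)) \<longlonglongrightarrow> green E x y"
    by (rule LIMSEQ_subseq_LIMSEQ)
  then show ?thesis unfolding sums_def o_def sum_gblock_eq_partial_green .
qed

lemma sum_atLeastLessThan_double:
  fixes g :: "nat \<Rightarrow> real"
  shows "(\<Sum>k\<in>{2*a..<2*b}. g k) = (\<Sum>j\<in>{a..<b}. g (2*j) + g (2*j+1))"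
proof (induction b)
  case 0
  then show ?case by simp
next
  case (Suc b)
  have "2 * Suc b = Suc (Suc (2*b))" by simp
  then show ?case using Suc by (simp add: add.commute)
qed

lemma gblock_eq_sum_pairs:
  assumes "n \<ge> 1"
  shows "gblock E n x y = (\<Sum>j\<in>{2^(n-1) - 1..<2^n - 1}. srw_p E (2*j) x y + srw_p E (2*j+1) x y)"
proof -
  obtain m where n: "n = Suc m" using assms by (cases n) auto
  have "(2::nat)^n - 2 = 2 * (2^(n-1) - 1)" "(2::nat)^(n+1) - 2 = 2 * (2^n - 1)"
    by (simp_all add: n diff_mult_distrib2)
  then show ?thesis unfolding gblock_def by (simp only: sum_atLeastLessThan_double)
qed

text \<open>As the graph may be infinite,
  inner products of finitely supported functions are taken over a finite set U containing
  both supports, e.g. a walk_ball around the support of f.\<close>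

definition srw_op :: "('a \<Rightarrow> 'a \<Rightarrow> bool) \<Rightarrow> ('a \<Rightarrow> real) \<Rightarrow> 'a \<Rightarrow> real" where
  "srw_op E h x = (\<Sum>z\<in>nbrs E x. h z) / real (card (nbrs E x))"

definition srw_iter :: "('a \<Rightarrow> 'a \<Rightarrow> bool) \<Rightarrow> ('a \<Rightarrow> real) \<Rightarrow> nat \<Rightarrow> 'a \<Rightarrow> real" where
  "srw_iter E f k x = (\<Sum>y\<in>{y. f y \<noteq> 0}. srw_p E k x y * f y)"

lemma srw_iter_0:
  assumes "finite {y. f y \<noteq> 0}"
  shows "srw_iter E f 0 x = f x"
proof -
  have "srw_iter E f 0 x = (\<Sum>y\<in>{y. f y \<noteq> 0}. if x = y then f y else 0)"
    unfolding srw_iter_def by (intro sum.cong) auto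
  also have "\<dots> = f x" using assms by (simp add: sum.delta)
  finally show ?thesis .
qed

lemma srw_iter_Suc: "srw_iter E f (Suc k) x = srw_op E (srw_iter E f k) x"
proof -
  have "srw_iter E f (Suc k) x
      = (\<Sum>y\<in>{y. f y \<noteq> 0}. \<Sum>z\<in>nbrs E x. srw_p E k z y * f y) / real (card (nbrs E x))"
    by (simp add: srw_iter_def sum_divide_distrib sum_distrib_right)
  also have "\<dots> = (\<Sum>z\<in>nbrs E x. \<Sum>y\<in>{y. f y \<noteq> 0}. srw_p E k z y * f y) / real (card (nbrs E x))"
    by (subst sum.swap) (rule refl)
  finally show ?thesis by (simp add: srw_op_def srw_iter_def)
qed

lemma srw_iter_nonzero_relpow:
  assumes "srw_iter E f k x \<noteq> 0"
  obtains y where "f y \<noteq> 0" "(x, y) \<in> edge_rel E ^^ k"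
proof -
  obtain y where "f y \<noteq> 0" "srw_p E k x y * f y \<noteq> 0"
    using assms unfolding srw_iter_def by (auto elim: sum.not_neutral_contains_not_neutral)
  then show ?thesis by (intro that[of y] srw_p_nonzero_relpow) simp_all
qed

definition walk_ball :: "('a \<Rightarrow> 'a \<Rightarrow> bool) \<Rightarrow> 'a set \<Rightarrow> nat \<Rightarrow> 'a set" where
  "walk_ball E S K = (\<Union>i\<le>K. \<Union>y\<in>S. {x. (x, y) \<in> edge_rel E ^^ i})"

lemma subset_walk_ball: "S \<subseteq> walk_ball E S K"
  unfolding walk_ball_def by auto

lemma srw_iter_nonzero_walk_ball:
  "i \<le> K \<Longrightarrow> srw_iter E f i x \<noteq> 0 \<Longrightarrow> x \<in> walk_ball E {y. f y \<noteq> 0} K"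
  unfolding walk_ball_def by (erule srw_iter_nonzero_relpow) blast

lemma quadratic_form_eq_sum_srw_iter:
  assumes "finite {y. f y \<noteq> 0}" and "finite U" and "{y. f y \<noteq> 0} \<subseteq> U"
  shows "(\<Sum>x\<in>{y. f y \<noteq> 0}. \<Sum>y\<in>{y. f y \<noteq> 0}. f x * srw_p E m x y * f y)
    = (\<Sum>x\<in>U. f x * srw_iter E f m x)"
proof -
  have "(\<Sum>x\<in>{y. f y \<noteq> 0}. \<Sum>y\<in>{y. f y \<noteq> 0}. f x * srw_p E m x y * f y)
      = (\<Sum>x\<in>{y. f y \<noteq> 0}. f x * srw_iter E f m x)"
    by (simp add: srw_iter_def sum_distrib_left mult.assoc)
  also have "\<dots> = (\<Sum>x\<in>U. f x * srw_iter E f m x)"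
    by (rule sum.mono_neutral_left) (use assms in auto)
  finally show ?thesis .
qed

locale regular_walk =
  fixes E :: "'a \<Rightarrow> 'a \<Rightarrow> bool" and d :: nat
  assumes sym: "E x y \<Longrightarrow> E y x"
    and finite_nbrs: "finite (nbrs E x)"
    and card_nbrs: "card (nbrs E x) = d"
begin

lemma E_commute: "E x y \<longleftrightarrow> E y x"
  using sym by blast

lemma srw_p_Suc_right: "srw_p E (Suc k) x y = (\<Sum>z\<in>nbrs E y. srw_p E k x z) / real d"
proof (induction k arbitrary: x y)
  case 0
  have "(y \<in> nbrs E x) = (x \<in> nbrs E y)" using sym by (auto simp: nbrs_def)
  then show ?case using finite_nbrs by (simp add: card_nbrs sum.delta sum.delta')
next
  case (Suc k)
  have "srw_p E (Suc (Suc k)) x y = (\<Sum>z\<in>nbrs E x. srw_p E (Suc k) z y) / real d"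
    by (simp only: srw_p.simps(2) card_nbrs)
  also have "\<dots> = (\<Sum>z\<in>nbrs E x. (\<Sum>w\<in>nbrs E y. srw_p E k z w) / real d) / real d"
    by (simp only: Suc)
  also have "\<dots> = (\<Sum>w\<in>nbrs E y. (\<Sum>z\<in>nbrs E x. srw_p E k z w) / real d) / real d"
    by (simp only: sum_divide_distrib[symmetric], subst sum.swap, rule refl)
  also have "\<dots> = (\<Sum>w\<in>nbrs E y. srw_p E (Suc k) x w) / real d"
    by (simp add: card_nbrs)
  finally show ?case .
qed

lemma srw_p_sym: "srw_p E k x y = srw_p E k y x"
proof (induction k arbitrary: x y)
  case 0
  then show ?case by simp
next
  case (Suc k)
  have "(\<Sum>z\<in>nbrs E x. srw_p E k z y) = (\<Sum>z\<in>nbrs E x. srw_p E k y z)"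
    by (rule sum.cong[OF refl Suc.IH])
  then have "srw_p E (Suc k) x y = (\<Sum>z\<in>nbrs E x. srw_p E k y z) / real d"
    by (simp only: srw_p.simps(2) card_nbrs)
  also have "\<dots> = srw_p E (Suc k) y x" by (rule srw_p_Suc_right[symmetric])
  finally show ?case .
qed

lemma gblock_sym: "gblock E n x y = gblock E n y x"
  unfolding gblock_def by (intro sum.cong refl srw_p_sym)

lemma finite_relpow_predecessors: "finite {x. (x, y) \<in> edge_rel E ^^ i}"
proof (induction i)
  case 0
  then show ?case by simp
next
  case (Suc i)
  have "{x. (x, y) \<in> edge_rel E ^^ Suc i} \<subseteq> (\<Union>z\<in>{x. (x, y) \<in> edge_rel E ^^ i}. nbrs E z)"
  proof
    fix x assume "x \<in> {x. (x, y) \<in> edge_rel E ^^ Suc i}"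
    then obtain z where "(x, z) \<in> edge_rel E" "(z, y) \<in> edge_rel E ^^ i"
      by (blast dest: relpow_Suc_D2)
    then show "x \<in> (\<Union>z\<in>{x. (x, y) \<in> edge_rel E ^^ i}. nbrs E z)"
      using sym[of x z] by (auto simp: nbrs_def edge_rel_def)
  qed
  then show ?case using Suc finite_nbrs by (meson finite_UN_I finite_subset)
qed

lemma finite_walk_ball: "finite S \<Longrightarrow> finite (walk_ball E S K)"
  unfolding walk_ball_def using finite_relpow_predecessors by blast

lemma sum_mult_srw_op:
  assumes U: "finite U" and h: "\<And>x. h x \<noteq> 0 \<Longrightarrow> x \<in> U"
  shows "(\<Sum>x\<in>U. g x * srw_op E h x) = (\<Sum>x\<in>U. \<Sum>z\<in>U. if E x z then g x * h z else 0) / real d"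
proof -
  have "g x * srw_op E h x = (\<Sum>z\<in>U. if E x z then g x * h z else 0) / real d" for x
  proof -
    have "(\<Sum>z\<in>nbrs E x. h z) = (\<Sum>z\<in>nbrs E x \<inter> U. h z)"
      by (rule sum.mono_neutral_right) (use finite_nbrs h in auto)
    also have "nbrs E x \<inter> U = {z\<in>U. E x z}" by (auto simp: nbrs_def)
    finally have "(\<Sum>z\<in>nbrs E x. h z) = (\<Sum>z\<in>U. if E x z then h z else 0)"
      by (simp add: sum.inter_filter[OF U])
    then show ?thesis
      by (simp add: srw_op_def card_nbrs sum_distrib_left if_distrib cong: if_cong)
  qed
  then show ?thesis by (simp add: sum_divide_distrib)
qed

lemma srw_op_adjoint:
  assumes U: "finite U" and g: "\<And>x. g x \<noteq> 0 \<Longrightarrow> x \<in> U" and h: "\<And>x. h x \<noteq> 0 \<Longrightarrow> x \<in> U"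
  shows "(\<Sum>x\<in>U. g x * srw_op E h x) = (\<Sum>x\<in>U. srw_op E g x * h x)"
proof -
  have "(\<Sum>x\<in>U. g x * srw_op E h x) = (\<Sum>x\<in>U. \<Sum>z\<in>U. if E x z then g x * h z else 0) / real d"
    by (rule sum_mult_srw_op[OF U h])
  also have "\<dots> = (\<Sum>z\<in>U. \<Sum>x\<in>U. if E z x then h z * g x else 0) / real d"
    by (subst sum.swap) (intro sum.cong refl arg_cong2[where f = "(/)"], use E_commute in simp)
  also have "\<dots> = (\<Sum>z\<in>U. h z * srw_op E g z)"
    by (rule sum_mult_srw_op[OF U g, symmetric])
  finally show ?thesis by (simp add: mult.commute)
qed

lemma id_plus_srw_op_form_nonneg:
  assumes U: "finite U" and h: "\<And>x. h x \<noteq> 0 \<Longrightarrow> x \<in> U"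
  shows "(\<Sum>x\<in>U. h x * (h x + srw_op E h x)) \<ge> 0"
proof (cases "d = 0")
  case True
  then show ?thesis by (simp add: srw_op_def card_nbrs sum_nonneg)
next
  case False
  define A where "A = (\<Sum>x\<in>U. \<Sum>z\<in>U. if E x z then (h x)\<^sup>2 else 0)"
  define M where "M = (\<Sum>x\<in>U. \<Sum>z\<in>U. if E x z then h x * h z else 0)"
  have A_swap: "A = (\<Sum>x\<in>U. \<Sum>z\<in>U. if E x z then (h z)\<^sup>2 else 0)"
    unfolding A_def by (subst sum.swap) (intro sum.cong refl if_cong E_commute)
  have "(if E x z then (h x + h z)\<^sup>2 else 0) = (if E x z then (h x)\<^sup>2 else 0)
      + 2 * (if E x z then h x * h z else 0) + (if E x z then (h z)\<^sup>2 else 0)" for x z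
    by (simp add: power2_sum)
  then have "(\<Sum>x\<in>U. \<Sum>z\<in>U. if E x z then (h x + h z)\<^sup>2 else 0)
      = A + 2 * M + (\<Sum>x\<in>U. \<Sum>z\<in>U. if E x z then (h z)\<^sup>2 else 0)"
    unfolding A_def M_def by (simp add: sum.distrib sum_distrib_left)
  also have "\<dots> = 2 * A + 2 * M"
    by (simp add: A_swap)
  moreover have "0 \<le> (\<Sum>x\<in>U. \<Sum>z\<in>U. if E x z then (h x + h z)\<^sup>2 else 0)"
    by (intro sum_nonneg) simp
  ultimately have M_ge: "- A \<le> M" by simp
  have "A = (\<Sum>x\<in>U. (h x)\<^sup>2 * real (card {z\<in>U. E x z}))"
    unfolding A_def by (intro sum.cong refl) (simp add: sum.inter_filter[OF U, symmetric])
  also have "\<dots> \<le> (\<Sum>x\<in>U. (h x)\<^sup>2 * real d)"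
  proof (intro sum_mono mult_left_mono)
    fix x
    have "{z\<in>U. E x z} \<subseteq> nbrs E x" by (auto simp: nbrs_def)
    then have "card {z\<in>U. E x z} \<le> d"
      using card_mono[OF finite_nbrs] card_nbrs by simp
    then show "real (card {z\<in>U. E x z}) \<le> real d" by simp
  qed simp
  finally have "- (\<Sum>x\<in>U. (h x)\<^sup>2) * real d \<le> M"
    using M_ge by (simp add: sum_distrib_right)
  then have "- (\<Sum>x\<in>U. (h x)\<^sup>2) \<le> M / real d"
    using False by (simp add: le_divide_eq)
  moreover have "(\<Sum>x\<in>U. h x * (h x + srw_op E h x)) = (\<Sum>x\<in>U. (h x)\<^sup>2) + M / real d"
    using sum_mult_srw_op[OF U h, of h]
    by (simp add: distrib_left sum.distrib power2_eq_square M_def)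
  ultimately show ?thesis by linarith
qed

lemma srw_iter_shift:
  assumes S: "finite {y. f y \<noteq> 0}" and "a \<le> m" and "m \<le> K"
  defines "U \<equiv> walk_ball E {y. f y \<noteq> 0} K"
  shows "(\<Sum>x\<in>U. f x * srw_iter E f m x) = (\<Sum>x\<in>U. srw_iter E f a x * srw_iter E f (m - a) x)"
  using \<open>a \<le> m\<close>
proof (induction a)
  case 0
  then show ?case by (simp add: srw_iter_0[OF S])
next
  case (Suc a)
  have m_a: "m - a = Suc (m - Suc a)" using Suc.prems by simp
  have "(\<Sum>x\<in>U. srw_iter E f a x * srw_iter E f (m - a) x)
      = (\<Sum>x\<in>U. srw_iter E f a x * srw_op E (srw_iter E f (m - Suc a)) x)"
    unfolding m_a srw_iter_Suc ..
  also have "\<dots> = (\<Sum>x\<in>U. srw_op E (srw_iter E f a) x * srw_iter E f (m - Suc a) x)"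
  proof (rule srw_op_adjoint)
    show "finite U" unfolding U_def by (rule finite_walk_ball[OF S])
    show "x \<in> U" if "srw_iter E f a x \<noteq> 0" for x
      unfolding U_def using Suc.prems \<open>m \<le> K\<close> by (intro srw_iter_nonzero_walk_ball[OF _ that]) simp
    show "x \<in> U" if "srw_iter E f (m - Suc a) x \<noteq> 0" for x
      unfolding U_def using \<open>m \<le> K\<close> by (intro srw_iter_nonzero_walk_ball[OF _ that]) simp
  qed
  also have "\<dots> = (\<Sum>x\<in>U. srw_iter E f (Suc a) x * srw_iter E f (m - Suc a) x)"
    unfolding srw_iter_Suc ..
  finally show ?case using Suc by simp
qed

lemma srw_pair_form_nonneg:
  assumes S: "finite {y. f y \<noteq> 0}"
  shows "(\<Sum>x\<in>{y. f y \<noteq> 0}. \<Sum>y\<in>{y. f y \<noteq> 0}.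
           f x * (srw_p E (2*j) x y + srw_p E (2*j+1) x y) * f y) \<ge> 0"
proof -
  define U where "U = walk_ball E {y. f y \<noteq> 0} (2*j+1)"
  define h where "h = srw_iter E f j"
  have U: "finite U" "{y. f y \<noteq> 0} \<subseteq> U"
    unfolding U_def by (rule finite_walk_ball[OF S], rule subset_walk_ball)
  have "(\<Sum>x\<in>{y. f y \<noteq> 0}. \<Sum>y\<in>{y. f y \<noteq> 0}.
           f x * (srw_p E (2*j) x y + srw_p E (2*j+1) x y) * f y)
      = (\<Sum>x\<in>U. f x * srw_iter E f (2*j) x) + (\<Sum>x\<in>U. f x * srw_iter E f (2*j+1) x)"
    unfolding distrib_left distrib_right sum.distrib quadratic_form_eq_sum_srw_iter[OF S U] ..
  also have "\<dots> = (\<Sum>x\<in>U. h x * h x) + (\<Sum>x\<in>U. h x * srw_op E h x)"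
    using srw_iter_shift[OF S, of j "2*j" "2*j+1"] srw_iter_shift[OF S, of j "2*j+1" "2*j+1"]
    unfolding U_def h_def by (simp add: mult_2 srw_iter_Suc[symmetric])
  also have "\<dots> = (\<Sum>x\<in>U. h x * (h x + srw_op E h x))"
    by (simp add: distrib_left sum.distrib)
  also have "\<dots> \<ge> 0"
    unfolding h_def U_def
    by (intro id_plus_srw_op_form_nonneg finite_walk_ball S srw_iter_nonzero_walk_ball) auto
  finally show ?thesis .
qed

lemma gblock_form_nonneg:
  assumes S: "finite {x. f x \<noteq> 0}" and "n \<ge> 1"
  shows "(\<Sum>x\<in>{x. f x \<noteq> 0}. \<Sum>y\<in>{x. f x \<noteq> 0}. f x * gblock E n x y * f y) \<ge> 0"
proof -
  let ?S = "{x. f x \<noteq> 0}" and ?J = "{2^(n-1) - 1..<2^n - 1::nat}"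
  have "(\<Sum>x\<in>?S. \<Sum>y\<in>?S. f x * gblock E n x y * f y)
     = (\<Sum>j\<in>?J. \<Sum>x\<in>?S. \<Sum>y\<in>?S. f x * (srw_p E (2*j) x y + srw_p E (2*j+1) x y) * f y)"
    unfolding gblock_eq_sum_pairs[OF \<open>n \<ge> 1\<close>] sum_distrib_left sum_distrib_right
    by (subst sum.swap, subst (2) sum.swap, rule refl)
  also have "\<dots> \<ge> 0"
    by (intro sum_nonneg srw_pair_form_nonneg S)
  finally show ?thesis .
qed

end

theorem mainTheorem6:
  fixes E :: "'a \<Rightarrow> 'a \<Rightarrow> bool"
  assumes "simple_graph E" and "regular_graph E" and "connected_graph E"
  shows "(\<forall>n\<ge>1.
      (\<forall>x y. gblock E n x y = gblock E n y x)
    \<and> (\<forall>f :: 'a \<Rightarrow> real. finite {x. f x \<noteq> 0} \<longrightarrow>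
          (\<Sum>x\<in>{x. f x \<noteq> 0}. \<Sum>y\<in>{x. f x \<noteq> 0}. f x * gblock E n x y * f y) \<ge> 0)
    \<and> (\<forall>x y. gblock E n x y \<ge> 0)
    \<and> (\<forall>x y. gdist E x y > 2^(n+1) - 2 \<longrightarrow> gblock E n x y = 0))
    \<and> (transient E \<longrightarrow> (\<forall>x y. (\<lambda>n. gblock E (n+1) x y) sums green E x y))"
proof -
  obtain d where "\<And>x. finite (nbrs E x) \<and> card (nbrs E x) = d"
    using \<open>regular_graph E\<close> unfolding regular_graph_def by blast
  moreover have "\<And>x y. E x y \<Longrightarrow> E y x"
    using \<open>simple_graph E\<close> unfolding simple_graph_def by blast
  ultimately interpret regular_walk E d
    by unfold_locales blast+
  have "transient E \<longrightarrow> (\<forall>x y. (\<lambda>n. gblock E (n+1) x y) sums green E x y)"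
    unfolding transient_def by (intro impI allI gblock_sums_green) blast
  then show ?thesis
    using gblock_sym gblock_form_nonneg gblock_nonneg gblock_eq_0_if_far by auto
qed

end
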